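(* Let $d<l$ be positive integers. Let $Y=(\beta\mathbb{N})^l$ with the product topology and coordinatewise operation, and let $S_o=\{(P(1),\ldots,P(l)) : P(x)=\sum_{k=0}^d a_kx^k,\ a_0,\ldots,a_d\in\omega\}$ and $I_o=\{(P(1),\ldots,P(l)) : P(x)=\sum_{k=0}^d a_kx^k,\ a_0,\ldots,a_d\in\mathbb{N}\}$, viewed as subsets of $Y$. Then $S=\mathrm{cl}_Y(S_o)$ is a subsemigroup of $Y$, $I=\mathrm{cl}_Y(I_o)$ is an ideal of $S$, and for every $p\in K(\beta\mathbb{N})$ the constant tuple $(p,p,\ldots,p)$ belongs to $K(S)$ and hence to $I$.
   Context: $\omega=\{0,1,2,\ldots\}$, $\mathbb{N}=\{1,2,\ldots\}$. $\beta\mathbb{N}$ is the Stone–Čech compactification of the discrete space $\mathbb{N}$ (ultrafilters on $\mathbb{N}$), with the usual extension of addition making it a compact right topological semigroup; $\mathbb{N}$ is identified with the principal ultrafilters. $K(T)$ denotes the smallest two-sided ideal of a compact right topological semigroup $T$. *)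

theory Defs
  imports "HOL-Analysis.Analysis"
begin

text \<open>Ultrafilters on omega = {0,1,2,...} (the type nat), i.e. points of beta omega.\<close>
definition ultra :: "nat set set \<Rightarrow> bool" where
  "ultra U \<longleftrightarrow> UNIV \<in> U \<and> {} \<notin> U \<and>
     (\<forall>A B. A \<in> U \<longrightarrow> A \<subseteq> B \<longrightarrow> B \<in> U) \<and>
     (\<forall>A B. A \<in> U \<longrightarrow> B \<in> U \<longrightarrow> A \<inter> B \<in> U) \<and>
     (\<forall>A. A \<in> U \<or> - A \<in> U)"

definition betaW :: "nat set set set" where
  "betaW = {U. ultra U}"

definition betaN :: "nat set set set" where
  "betaN = {U. ultra U \<and> {0<..} \<in> U}"

definition pr :: "nat \<Rightarrow> nat set set" where
  "pr n = {A. n \<in> A}"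

definition uadd :: "nat set set \<Rightarrow> nat set set \<Rightarrow> nat set set" where
  "uadd p q = {A. {x. {y. x + y \<in> A} \<in> q} \<in> p}"

definition betaW_top :: "nat set set topology" where
  "betaW_top = topology_generated_by {{p \<in> betaW. A \<in> p} | A. True}"

definition Ytop :: "nat \<Rightarrow> (nat \<Rightarrow> nat set set) topology" where
  "Ytop l = product_topology (\<lambda>i. betaW_top) {1..l}"

definition Yadd :: "nat \<Rightarrow> (nat \<Rightarrow> nat set set) \<Rightarrow> (nat \<Rightarrow> nat set set) \<Rightarrow> (nat \<Rightarrow> nat set set)" where
  "Yadd l x y = (\<lambda>i\<in>{1..l}. uadd (x i) (y i))"

definition is_ideal :: "'a set \<Rightarrow> ('a \<Rightarrow> 'a \<Rightarrow> 'a) \<Rightarrow> 'a set \<Rightarrow> bool" where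
  "is_ideal T f J \<longleftrightarrow> J \<noteq> {} \<and> J \<subseteq> T \<and> (\<forall>x\<in>T. \<forall>y\<in>J. f x y \<in> J \<and> f y x \<in> J)"

definition Kmin :: "'a set \<Rightarrow> ('a \<Rightarrow> 'a \<Rightarrow> 'a) \<Rightarrow> 'a set" where
  "Kmin T f = (THE J. is_ideal T f J \<and> (\<forall>J'. is_ideal T f J' \<longrightarrow> J \<subseteq> J'))"

definition is_subsemigroup :: "'a set \<Rightarrow> 'a set \<Rightarrow> ('a \<Rightarrow> 'a \<Rightarrow> 'a) \<Rightarrow> bool" where
  "is_subsemigroup S T f \<longleftrightarrow> S \<subseteq> T \<and> (\<forall>x\<in>S. \<forall>y\<in>S. f x y \<in> S)"

definition poly_tuple :: "nat \<Rightarrow> nat \<Rightarrow> (nat \<Rightarrow> nat) \<Rightarrow> (nat \<Rightarrow> nat set set)" where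
  "poly_tuple l d a = (\<lambda>i\<in>{1..l}. pr (\<Sum>k\<le>d. a k * i ^ k))"

definition So :: "nat \<Rightarrow> nat \<Rightarrow> (nat \<Rightarrow> nat set set) set" where
  "So l d = {poly_tuple l d a | a. True}"

definition Io :: "nat \<Rightarrow> nat \<Rightarrow> (nat \<Rightarrow> nat set set) set" where
  "Io l d = {poly_tuple l d a | a. \<forall>k\<le>d. 1 \<le> a k}"

end

theory Submission
  imports Defs
begin

text \<open>
  A compact Hausdorff right topological semigroup \<open>T\<close> has minimal idempotents (Ellis--Numakura and
  Zorn), and a minimal idempotent lies in every ideal of \<open>T\<close>; hence \<open>K(T)\<close> is the intersection of
  all ideals. Since left translations by principal ultrafilters are continuous, the closure \<open>S\<close>
  of the subsemigroup \<open>S\<^sub>o\<close> of \<open>Y\<close> is again such a semigroup and the closure \<open>I\<close> of the ideal \<open>I\<^sub>o\<close>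
  of \<open>S\<^sub>o\<close> is an ideal of \<open>S\<close>. For a minimal idempotent \<open>q\<close> of \<open>\<beta>\<nat>\<close>, the constant tuple
  \<open>(q, \<dots>, q)\<close> lies in \<open>S\<close> (principal ultrafilters are dense and constants are polynomials)
  and is a minimal idempotent of \<open>S\<close>, so it lies in \<open>K(S)\<close>. The diagonal \<open>\<beta>\<nat> \<rightarrow> S\<close> is a
  homomorphism, so the preimage of the ideal \<open>K(S)\<close> is an ideal of \<open>\<beta>\<nat>\<close> and contains \<open>K(\<beta>\<nat>)\<close>;
  finally \<open>K(S) \<subseteq> I\<close>.
\<close>


section \<open>Ultrafilters on \<open>\<omega>\<close>\<close>

lemma ultraD:
  assumes "ultra U"
  shows ultra_UNIV: "UNIV \<in> U"
    and ultra_empty: "{} \<notin> U"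
    and ultra_mono: "A \<in> U \<Longrightarrow> A \<subseteq> B \<Longrightarrow> B \<in> U"
    and ultra_Int: "A \<in> U \<Longrightarrow> B \<in> U \<Longrightarrow> A \<inter> B \<in> U"
    and ultra_cases: "A \<in> U \<or> - A \<in> U"
  using assms unfolding ultra_def by blast+

lemma ultra_compl:
  assumes "ultra U"
  shows "- A \<in> U \<longleftrightarrow> A \<notin> U"
  using ultra_Int[OF assms, of A "- A"] ultra_empty[OF assms] ultra_cases[OF assms, of A] by auto

lemma ultra_Int_iff:
  assumes "ultra U"
  shows "A \<inter> B \<in> U \<longleftrightarrow> A \<in> U \<and> B \<in> U"
  using ultra_Int[OF assms] ultra_mono[OF assms] by blast

lemma ultra_Inter:
  assumes "ultra U" "finite \<F>" "\<F> \<subseteq> U"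
  shows "\<Inter>\<F> \<in> U"
  using assms(2,3)
  by (induction \<F> rule: finite_induct) (simp_all add: ultra_UNIV ultra_Int assms(1))

lemma ultra_separate:
  assumes "ultra p" "ultra q" "p \<noteq> q"
  shows "\<exists>A. A \<in> p \<and> - A \<in> q"
proof -
  obtain A where "A \<in> p \<and> A \<notin> q \<or> A \<in> q \<and> A \<notin> p"
    using assms(3) by blast
  then show ?thesis
    using ultra_compl[OF assms(1)] ultra_compl[OF assms(2)] by (metis double_compl)
qed

lemma ultra_pr: "ultra (pr n)"
  unfolding ultra_def pr_def by auto

lemma pr_in_betaW: "pr n \<in> betaW"
  by (simp add: betaW_def ultra_pr)

lemma mem_uadd_pr: "A \<in> uadd (pr n) q \<longleftrightarrow> {y. n + y \<in> A} \<in> q"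
  unfolding uadd_def pr_def by simp

lemma uadd_pr: "uadd (pr m) (pr n) = pr (m + n)"
  unfolding uadd_def pr_def by simp

lemma uadd_assoc: "uadd (uadd p q) r = uadd p (uadd q r)"
  unfolding uadd_def by (simp add: add.assoc)

lemma ultra_uadd:
  assumes p: "ultra p" and q: "ultra q"
  shows "ultra (uadd p q)"
proof -
  let ?Q = "\<lambda>A. {x. {y. x + y \<in> A} \<in> q}"
  have Int: "?Q (A \<inter> B) = ?Q A \<inter> ?Q B" for A B
    by (simp add: Collect_conj_eq ultra_Int_iff[OF q])
  have Compl: "?Q (- A) = - ?Q A" for A
    by (simp add: Collect_neg_eq ultra_compl[OF q])
  have mono: "?Q A \<subseteq> ?Q B" if "A \<subseteq> B" for A B
    using that by (auto elim!: ultra_mono[OF q])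
  have "UNIV \<in> uadd p q" "{} \<notin> uadd p q"
    using ultra_UNIV[OF p] ultra_UNIV[OF q] ultra_empty[OF p] ultra_empty[OF q] by (simp_all add: uadd_def)
  moreover have "A \<in> uadd p q \<Longrightarrow> A \<subseteq> B \<Longrightarrow> B \<in> uadd p q" for A B
    unfolding uadd_def mem_Collect_eq using mono ultra_mono[OF p] by meson
  moreover have "A \<inter> B \<in> uadd p q \<longleftrightarrow> A \<in> uadd p q \<and> B \<in> uadd p q" for A B
    unfolding uadd_def mem_Collect_eq Int by (rule ultra_Int_iff[OF p])
  moreover have "- A \<in> uadd p q \<longleftrightarrow> A \<notin> uadd p q" for A
    unfolding uadd_def mem_Collect_eq Compl by (rule ultra_compl[OF p])
  ultimately show ?thesis
    unfolding ultra_def by blast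
qed

lemma uadd_in_betaW: "p \<in> betaW \<Longrightarrow> q \<in> betaW \<Longrightarrow> uadd p q \<in> betaW"
  by (simp add: betaW_def ultra_uadd)

lemma betaN_subset_betaW: "betaN \<subseteq> betaW"
  by (auto simp: betaN_def betaW_def)

lemma uadd_in_betaN:
  assumes "p \<in> betaW" "q \<in> betaN"
  shows "uadd p q \<in> betaN"
proof -
  have "{y. x + y \<in> {0<..}} \<in> q" for x
    using assms(2) by (auto simp: betaN_def elim: ultra_mono)
  then show ?thesis
    using assms betaN_subset_betaW ultra_UNIV
    by (auto simp: betaN_def betaW_def uadd_def ultra_uadd[unfolded uadd_def])
qed

definition fip :: "'a set set \<Rightarrow> bool" where
  "fip \<G> \<longleftrightarrow> (\<forall>\<F>. finite \<F> \<and> \<F> \<subseteq> \<G> \<longrightarrow> \<Inter>\<F> \<noteq> {})"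

lemma maximal_fip_mem_or_compl:
  assumes "fip M" and maximal: "\<And>X. fip X \<Longrightarrow> M \<subseteq> X \<Longrightarrow> X = M"
  shows "A \<in> M \<or> - A \<in> M"
proof -
  have obstruction: "\<exists>\<F>. finite \<F> \<and> \<F> \<subseteq> M \<and> \<Inter>\<F> \<inter> B = {}" if "B \<notin> M" for B
  proof -
    have "\<not> fip (insert B M)"
      using maximal[of "insert B M"] that by blast
    then obtain \<F> where \<F>: "finite \<F>" "\<F> \<subseteq> insert B M" "\<Inter>\<F> = {}"
      unfolding fip_def by blast
    have "\<Inter>(\<F> - {B}) \<inter> B \<subseteq> \<Inter>\<F>"
      by blast
    then have "\<Inter>(\<F> - {B}) \<inter> B = {}"
      using \<F>(3) by blast
    moreover have "finite (\<F> - {B})" "\<F> - {B} \<subseteq> M"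
      using \<F>(1,2) by auto
    ultimately show ?thesis
      by blast
  qed
  show ?thesis
  proof (rule ccontr)
    assume "\<not> (A \<in> M \<or> - A \<in> M)"
    then obtain \<F>1 \<F>2 where \<F>1: "finite \<F>1" "\<F>1 \<subseteq> M" "\<Inter>\<F>1 \<inter> A = {}"
      and \<F>2: "finite \<F>2" "\<F>2 \<subseteq> M" "\<Inter>\<F>2 \<inter> - A = {}"
      using obstruction[of A] obstruction[of "- A"] by blast
    have "\<Inter>(\<F>1 \<union> \<F>2) \<subseteq> (\<Inter>\<F>1 \<inter> A) \<union> (\<Inter>\<F>2 \<inter> - A)"
      by blast
    then have "\<Inter>(\<F>1 \<union> \<F>2) = {}"
      using \<F>1(3) \<F>2(3) by blast
    moreover have "finite (\<F>1 \<union> \<F>2)" "\<F>1 \<union> \<F>2 \<subseteq> M"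
      using \<F>1 \<F>2 by auto
    ultimately show False
      using \<open>fip M\<close> unfolding fip_def by blast
  qed
qed

lemma maximal_fip_ultra:
  assumes "fip M" and maximal: "\<And>X. fip X \<Longrightarrow> M \<subseteq> X \<Longrightarrow> X = M"
  shows "ultra M"
proof -
  have nonempty: "\<Inter>\<F> \<noteq> {}" if "finite \<F>" "\<F> \<subseteq> M" for \<F>
    using \<open>fip M\<close> that by (simp add: fip_def)
  note cases = maximal_fip_mem_or_compl[OF assms]
  show ?thesis
    unfolding ultra_def
  proof (intro conjI allI impI cases)
    show "{} \<notin> M"
      using nonempty[of "{{}}"] by auto
    then show "UNIV \<in> M"
      using cases[of UNIV] by simp
  next
    fix A B assume "A \<in> M" "A \<subseteq> B"
    then have "\<Inter>{A, - B} = {}"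
      by blast
    show "B \<in> M"
    proof (rule ccontr)
      assume "B \<notin> M"
      then have "- B \<in> M"
        using cases by blast
      then show False
        using nonempty[of "{A, - B}"] \<open>A \<in> M\<close> \<open>\<Inter>{A, - B} = {}\<close> by simp
    qed
  next
    fix A B assume "A \<in> M" "B \<in> M"
    have "\<Inter>{A, B, - (A \<inter> B)} = {}"
      by blast
    show "A \<inter> B \<in> M"
    proof (rule ccontr)
      assume "A \<inter> B \<notin> M"
      then have "- (A \<inter> B) \<in> M"
        using cases by blast
      then show False
        using nonempty[of "{A, B, - (A \<inter> B)}"] \<open>A \<in> M\<close> \<open>B \<in> M\<close> \<open>\<Inter>{A, B, - (A \<inter> B)} = {}\<close>
        by simp
    qed
  qed
qed

lemma ultrafilter_exists:
  assumes "fip \<G>"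
  shows "\<exists>U. ultra U \<and> \<G> \<subseteq> U"
proof -
  define \<A> where "\<A> = {M. \<G> \<subseteq> M \<and> fip M}"
  have "\<exists>M\<in>\<A>. \<forall>X\<in>\<A>. M \<subseteq> X \<longrightarrow> X = M"
  proof (rule subset_Zorn_nonempty)
    show "\<A> \<noteq> {}"
      using assms by (auto simp: \<A>_def)
    fix \<C> assume "\<C> \<noteq> {}" and chain: "subset.chain \<A> \<C>"
    then have \<C>: "\<C> \<subseteq> \<A>"
      by (simp add: subset.chain_def)
    have "fip (\<Union>\<C>)"
      unfolding fip_def
    proof (intro allI impI, elim conjE)
      fix \<F> assume "finite \<F>" "\<F> \<subseteq> \<Union>\<C>"
      then obtain M where "M \<in> \<C>" "\<F> \<subseteq> M"
        using finite_subset_Union_chain[OF _ _ \<open>\<C> \<noteq> {}\<close> chain] by blast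
      moreover have "fip M"
        using \<C> \<open>M \<in> \<C>\<close> by (auto simp: \<A>_def)
      ultimately show "\<Inter>\<F> \<noteq> {}"
        using \<open>finite \<F>\<close> by (simp add: fip_def)
    qed
    moreover have "\<G> \<subseteq> \<Union>\<C>"
      using \<open>\<C> \<noteq> {}\<close> \<C> unfolding \<A>_def by blast
    ultimately show "\<Union>\<C> \<in> \<A>"
      by (simp add: \<A>_def)
  qed
  then obtain M where "M \<in> \<A>" and maximal: "\<forall>X\<in>\<A>. M \<subseteq> X \<longrightarrow> X = M"
    by blast
  then have M: "\<G> \<subseteq> M" "fip M"
    by (simp_all add: \<A>_def)
  have "X = M" if "fip X" "M \<subseteq> X" for X
    using maximal that M(1) unfolding \<A>_def by blast
  then have "ultra M"
    using M(2) maximal_fip_ultra by blast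
  with M(1) show ?thesis
    by blast
qed


section \<open>The Stone topology on \<open>\<beta>\<omega>\<close>\<close>

definition betaW_basic :: "nat set \<Rightarrow> nat set set set" where
  "betaW_basic A = {p \<in> betaW. A \<in> p}"

lemma betaW_top_eq: "betaW_top = topology_generated_by (range betaW_basic)"
  unfolding betaW_top_def betaW_basic_def by (simp add: full_SetCompr_eq)

lemma Union_range_betaW_basic: "\<Union>(range betaW_basic) = betaW"
  by (auto simp: betaW_basic_def betaW_def) (blast intro: ultra_UNIV)

lemma topspace_betaW_top [simp]: "topspace betaW_top = betaW"
  by (simp add: betaW_top_eq Union_range_betaW_basic)

lemma openin_betaW_basic: "openin betaW_top (betaW_basic A)"
  unfolding betaW_top_eq by (rule topology_generated_by_Basis) simp

lemma closedin_betaW_basic: "closedin betaW_top (betaW_basic A)"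
proof -
  have "betaW - betaW_basic A = betaW_basic (- A)"
    by (auto simp: betaW_basic_def betaW_def ultra_compl)
  then show ?thesis
    using openin_betaW_basic[of "- A"] by (simp add: closedin_def betaW_basic_def)
qed

lemma openin_betaW_top_basic:
  assumes "openin betaW_top U" "p \<in> U"
  shows "\<exists>A. p \<in> betaW_basic A \<and> betaW_basic A \<subseteq> U"
proof -
  have "generate_topology_on (range betaW_basic) U"
    using assms(1) unfolding betaW_top_eq by (rule openin_topology_generated_by)
  then show ?thesis
    using assms(2)
  proof (induction arbitrary: p)
    case (Int U V)
    then obtain A B where "p \<in> betaW_basic A" "betaW_basic A \<subseteq> U" "p \<in> betaW_basic B" "betaW_basic B \<subseteq> V"
      by blast
    moreover have "betaW_basic A \<inter> betaW_basic B = betaW_basic (A \<inter> B)"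
      by (auto simp: betaW_basic_def betaW_def ultra_Int_iff)
    ultimately show ?case
      by blast
  next
    case (UN \<K>)
    then obtain K where "K \<in> \<K>" "p \<in> K"
      by blast
    with UN.IH[of K p] show ?case
      by blast
  qed auto
qed

lemma Hausdorff_space_betaW_top: "Hausdorff_space betaW_top"
  unfolding Hausdorff_space_def
proof (intro allI impI, elim conjE)
  fix p q assume "p \<in> topspace betaW_top" "q \<in> topspace betaW_top" "p \<noteq> q"
  then have p: "ultra p" and q: "ultra q"
    by (simp_all add: betaW_def)
  then obtain A where "A \<in> p" "- A \<in> q"
    using ultra_separate \<open>p \<noteq> q\<close> by blast
  moreover have "disjnt (betaW_basic A) (betaW_basic (- A))"
    by (auto simp: disjnt_def betaW_basic_def betaW_def ultra_compl)
  moreover have "p \<in> betaW_basic A" "q \<in> betaW_basic (- A)"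
    using p q \<open>A \<in> p\<close> \<open>- A \<in> q\<close> by (simp_all add: betaW_basic_def betaW_def)
  ultimately show "\<exists>U V. openin betaW_top U \<and> openin betaW_top V \<and> p \<in> U \<and> q \<in> V \<and> disjnt U V"
    using openin_betaW_basic by blast
qed

lemma fip_no_finite_subcover:
  assumes no_subcover: "\<And>\<F>. finite \<F> \<Longrightarrow> \<F> \<subseteq> \<U> \<Longrightarrow> \<not> betaW \<subseteq> \<Union>\<F>"
  shows "fip {C. \<exists>U\<in>\<U>. betaW_basic (- C) \<subseteq> U}"
  unfolding fip_def
proof (intro allI impI, elim conjE)
  fix \<F> assume \<F>: "finite \<F>" "\<F> \<subseteq> {C. \<exists>U\<in>\<U>. betaW_basic (- C) \<subseteq> U}"
  then have "\<forall>C\<in>\<F>. \<exists>U. U \<in> \<U> \<and> betaW_basic (- C) \<subseteq> U"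
    by blast
  then obtain u where u: "\<forall>C\<in>\<F>. u C \<in> \<U> \<and> betaW_basic (- C) \<subseteq> u C"
    by (rule bchoice[elim_format]) blast
  have "finite (u ` \<F>)" "u ` \<F> \<subseteq> \<U>"
    using \<F>(1) u by auto
  then obtain p where p: "p \<in> betaW" "p \<notin> \<Union>(u ` \<F>)"
    using no_subcover by blast
  have "\<F> \<subseteq> p"
  proof
    fix C assume "C \<in> \<F>"
    then have "p \<notin> betaW_basic (- C)"
      using u p by blast
    then show "C \<in> p"
      using p(1) by (simp add: betaW_basic_def betaW_def ultra_compl)
  qed
  then have "\<Inter>\<F> \<in> p"
    using p(1) \<F>(1) ultra_Inter by (simp add: betaW_def)
  then show "\<Inter>\<F> \<noteq> {}"
    using p(1) ultra_empty by (auto simp: betaW_def)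
qed

text \<open>An ultrafilter containing all sets whose complements are covered by single members of an
  open cover without finite subcover would lie in no member of the cover.\<close>
lemma compact_space_betaW_top: "compact_space betaW_top"
  unfolding compact_space_def compactin_def
proof (intro conjI allI impI subset_refl, elim conjE, rule ccontr)
  fix \<U> assume "\<forall>U\<in>\<U>. openin betaW_top U" and cover: "topspace betaW_top \<subseteq> \<Union>\<U>"
    and "\<nexists>\<F>. finite \<F> \<and> \<F> \<subseteq> \<U> \<and> topspace betaW_top \<subseteq> \<Union>\<F>"
  then have "fip {C. \<exists>U\<in>\<U>. betaW_basic (- C) \<subseteq> U}"
    by (intro fip_no_finite_subcover) auto
  then obtain U where U: "ultra U" "{C. \<exists>U\<in>\<U>. betaW_basic (- C) \<subseteq> U} \<subseteq> U"
    using ultrafilter_exists by blast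
  then obtain V where "V \<in> \<U>" "U \<in> V"
    using cover by (auto simp: betaW_def)
  then obtain A where A: "U \<in> betaW_basic A" "betaW_basic A \<subseteq> V"
    using openin_betaW_top_basic \<open>\<forall>U\<in>\<U>. openin betaW_top U\<close> by blast
  then have "- A \<in> {C. \<exists>U\<in>\<U>. betaW_basic (- C) \<subseteq> U}"
    using \<open>V \<in> \<U>\<close> by auto
  then have "- A \<in> U"
    using U(2) by blast
  then show False
    using A(1) U(1) by (simp add: betaW_basic_def ultra_compl)
qed

lemma continuous_map_betaW_topI:
  assumes "h ` betaW \<subseteq> betaW" and "\<And>A. \<exists>B. \<forall>p\<in>betaW. A \<in> h p \<longleftrightarrow> B \<in> p"
  shows "continuous_map betaW_top betaW_top h"
proof -
  have "continuous_map betaW_top (topology_generated_by (range betaW_basic)) h"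
  proof (rule continuous_on_generated_topo)
    fix U assume "U \<in> range betaW_basic"
    then obtain A where "U = betaW_basic A"
      by blast
    moreover obtain B where "\<forall>p\<in>betaW. A \<in> h p \<longleftrightarrow> B \<in> p"
      using assms(2) by blast
    ultimately have "h -` U \<inter> topspace betaW_top = betaW_basic B"
      using assms(1) by (auto simp: betaW_basic_def)
    then show "openin betaW_top (h -` U \<inter> topspace betaW_top)"
      by (simp add: openin_betaW_basic)
  qed (use assms(1) in \<open>simp add: Union_range_betaW_basic\<close>)
  then show ?thesis
    by (simp flip: betaW_top_eq)
qed

lemma continuous_map_uadd_right:
  assumes "q \<in> betaW"
  shows "continuous_map betaW_top betaW_top (\<lambda>p. uadd p q)"
proof (rule continuous_map_betaW_topI)
  show "(\<lambda>p. uadd p q) ` betaW \<subseteq> betaW"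
    using assms uadd_in_betaW by blast
  show "\<exists>B. \<forall>p\<in>betaW. A \<in> uadd p q \<longleftrightarrow> B \<in> p" for A
    by (intro exI[of _ "{x. {y. x + y \<in> A} \<in> q}"]) (simp add: uadd_def)
qed

lemma continuous_map_uadd_pr_left: "continuous_map betaW_top betaW_top (uadd (pr n))"
proof (rule continuous_map_betaW_topI)
  show "uadd (pr n) ` betaW \<subseteq> betaW"
    using pr_in_betaW uadd_in_betaW by blast
  show "\<exists>B. \<forall>p\<in>betaW. A \<in> uadd (pr n) p \<longleftrightarrow> B \<in> p" for A
    by (intro exI[of _ "{y. n + y \<in> A}"]) (simp add: mem_uadd_pr)
qed

lemma closure_of_range_pr: "betaW_top closure_of range pr = betaW"
proof -
  have "p \<in> betaW_top closure_of range pr" if "p \<in> betaW" for p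
    unfolding in_closure_of
  proof (intro conjI allI impI)
    show "p \<in> topspace betaW_top"
      using that by simp
    fix U assume "p \<in> U \<and> openin betaW_top U"
    then obtain A where A: "p \<in> betaW_basic A" "betaW_basic A \<subseteq> U"
      using openin_betaW_top_basic by blast
    then have "A \<noteq> {}"
      using ultra_empty by (auto simp: betaW_basic_def betaW_def)
    then obtain a where "a \<in> A"
      by blast
    then have "pr a \<in> betaW_basic A"
      by (simp add: betaW_basic_def pr_in_betaW) (simp add: pr_def)
    then show "\<exists>y. y \<in> range pr \<and> y \<in> U"
      using A(2) by blast
  qed
  then show ?thesis
    using closure_of_subset_topspace[of betaW_top "range pr"] by auto
qed

lemma closedin_betaN: "closedin betaW_top betaN"
proof -
  have "betaN = betaW_basic {0<..}"
    by (auto simp: betaN_def betaW_basic_def betaW_def)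
  with closedin_betaW_basic show ?thesis
    by metis
qed


section \<open>Compact right topological semigroups\<close>

lemma compact_space_Inter_chain_nonempty:
  assumes "compact_space X" and chain: "subset.chain \<A> \<C>"
    and closed: "\<And>A. A \<in> \<C> \<Longrightarrow> closedin X A \<and> A \<noteq> {}"
  shows "\<Inter>\<C> \<noteq> {}"
proof -
  have total: "\<forall>A\<in>\<C>. \<forall>B\<in>\<C>. A \<subseteq> B \<or> B \<subseteq> A"
    using chain by (simp add: subset_chain_def)
  have "\<Inter>\<E> \<noteq> {}" if "finite \<E>" "\<E> \<subseteq> \<C>" for \<E>
  proof (cases "\<E> = {}")
    case False
    have "\<forall>A\<in>\<E>. \<forall>B\<in>\<E>. A \<subseteq> B \<or> B \<subseteq> A"
      using total \<open>\<E> \<subseteq> \<C>\<close> by (meson subsetD)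
    then have "subset.chain UNIV \<E>"
      by (simp add: subset_chain_def)
    then have "\<Inter>\<E> \<in> \<C>"
      using Inter_in_chain[OF \<open>finite \<E>\<close> False] \<open>\<E> \<subseteq> \<C>\<close> by blast
    then show ?thesis
      using closed by blast
  qed simp
  moreover have "\<forall>A\<in>\<C>. closedin X A"
    using closed by blast
  ultimately show ?thesis
    using \<open>compact_space X\<close>[unfolded compact_space_fip, rule_format, of \<C>] by blast
qed

lemma compact_space_minimal_closedin:
  assumes "compact_space X" "\<F> \<noteq> {}"
    and closed: "\<And>A. A \<in> \<F> \<Longrightarrow> closedin X A \<and> A \<noteq> {}"
    and chain: "\<And>\<C>. \<C> \<noteq> {} \<Longrightarrow> subset.chain \<F> \<C> \<Longrightarrow> \<Inter>\<C> \<noteq> {} \<Longrightarrow> \<Inter>\<C> \<in> \<F>"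
  shows "\<exists>M\<in>\<F>. \<forall>A\<in>\<F>. A \<subseteq> M \<longrightarrow> A = M"
proof -
  have Inter_nonempty: "\<Inter>\<C> \<noteq> {}" if "subset.chain \<F> \<C>" for \<C>
  proof (rule compact_space_Inter_chain_nonempty[OF \<open>compact_space X\<close> that])
    have "\<C> \<subseteq> \<F>"
      using that by (simp add: subset_chain_def)
    then show "closedin X A \<and> A \<noteq> {}" if "A \<in> \<C>" for A
      using closed that by blast
  qed
  \<comment> \<open>Zorn's lemma for the reverse inclusion, applied to complements.\<close>
  have "\<exists>M\<in>uminus ` \<F>. \<forall>A\<in>uminus ` \<F>. M \<subseteq> A \<longrightarrow> A = M"
  proof (rule subset_Zorn_nonempty)
    show "uminus ` \<F> \<noteq> {}"
      using \<open>\<F> \<noteq> {}\<close> by blast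
    fix \<C> assume "\<C> \<noteq> {}" "subset.chain (uminus ` \<F>) \<C>"
    then have "uminus ` \<C> \<noteq> {}" "uminus ` \<C> \<subseteq> \<F>"
      and "\<forall>A\<in>uminus ` \<C>. \<forall>B\<in>uminus ` \<C>. A \<subseteq> B \<or> B \<subseteq> A"
      unfolding subset_chain_def by (blast, force, blast)
    then have "\<Inter>(uminus ` \<C>) \<in> \<F>"
      using chain Inter_nonempty by (simp add: subset_chain_def)
    moreover have "\<Union>\<C> = - \<Inter>(uminus ` \<C>)"
      by blast
    ultimately show "\<Union>\<C> \<in> uminus ` \<F>"
      by blast
  qed
  then obtain M where "M \<in> \<F>" and max: "\<forall>A\<in>uminus ` \<F>. - M \<subseteq> A \<longrightarrow> A = - M"
    by blast
  have "A = M" if "A \<in> \<F>" "A \<subseteq> M" for A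
  proof -
    have "- A \<in> uminus ` \<F>" "- M \<subseteq> - A"
      using that by auto
    then have "- A = - M"
      using max by blast
    then show ?thesis
      by simp
  qed
  with \<open>M \<in> \<F>\<close> show ?thesis
    by blast
qed

definition minimal_idempotent :: "'a set \<Rightarrow> ('a \<Rightarrow> 'a \<Rightarrow> 'a) \<Rightarrow> 'a \<Rightarrow> bool" where
  "minimal_idempotent T f e \<longleftrightarrow>
     e \<in> T \<and> f e e = e \<and> (\<forall>g\<in>T. f g g = g \<and> f g e = g \<and> f e g = g \<longrightarrow> g = e)"

lemma Kmin_eqI:
  assumes "is_ideal T f K" "\<And>J. is_ideal T f J \<Longrightarrow> K \<subseteq> J"
  shows "Kmin T f = K"
  unfolding Kmin_def
proof (rule the_equality)
  show "is_ideal T f K \<and> (\<forall>J. is_ideal T f J \<longrightarrow> K \<subseteq> J)"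
    using assms by blast
  fix J assume "is_ideal T f J \<and> (\<forall>J'. is_ideal T f J' \<longrightarrow> J \<subseteq> J')"
  then show "J = K"
    using assms by (meson subset_antisym)
qed

lemma is_ideal_Inter_ideals:
  assumes closed: "\<And>x y. x \<in> T \<Longrightarrow> y \<in> T \<Longrightarrow> f x y \<in> T"
    and e: "e \<in> T" "\<And>J. is_ideal T f J \<Longrightarrow> e \<in> J"
  shows "is_ideal T f (\<Inter>{J. is_ideal T f J})"
proof -
  let ?K = "\<Inter>{J. is_ideal T f J}"
  have "is_ideal T f T"
    using closed e(1) by (auto simp: is_ideal_def)
  then have "?K \<subseteq> T"
    by (rule Inter_lower[OF CollectI])
  moreover have "e \<in> ?K"
    using e(2) by blast
  moreover have "f x y \<in> ?K \<and> f y x \<in> ?K" if "x \<in> T" "y \<in> ?K" for x y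
    using that by (auto simp: is_ideal_def)
  ultimately show ?thesis
    unfolding is_ideal_def by blast
qed

lemma continuous_map_product_coordinatewise:
  assumes "\<And>i. i \<in> I \<Longrightarrow> continuous_map X X (f i)"
  shows "continuous_map (product_topology (\<lambda>_. X) I) (product_topology (\<lambda>_. X) I) (\<lambda>x. \<lambda>i\<in>I. f i (x i))"
  unfolding continuous_map_componentwise
proof (intro conjI ballI)
  fix k assume "k \<in> I"
  then have "continuous_map (product_topology (\<lambda>_. X) I) X (\<lambda>x. x k)"
    using continuous_map_product_projection by force
  then have "continuous_map (product_topology (\<lambda>_. X) I) X (f k \<circ> (\<lambda>x. x k))"
    by (rule continuous_map_compose[OF _ assms[OF \<open>k \<in> I\<close>]])
  then show "continuous_map (product_topology (\<lambda>_. X) I) X (\<lambda>x. (\<lambda>i\<in>I. f i (x i)) k)"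
    using \<open>k \<in> I\<close> by (simp add: comp_def)
qed auto

lemma image_closure_of_subset_closedin:
  assumes "continuous_map X Y g" "closedin Y E" "g ` S \<subseteq> E"
  shows "g ` (X closure_of S) \<subseteq> E"
proof -
  have "g ` (X closure_of S) \<subseteq> Y closure_of (g ` S)"
    by (rule continuous_map_image_closure_subset[OF assms(1)])
  also have "\<dots> \<subseteq> E"
    by (rule closure_of_minimal[OF assms(3,2)])
  finally show ?thesis .
qed

locale compact_right_topological_semigroup =
  fixes X :: "'a topology" and mult :: "'a \<Rightarrow> 'a \<Rightarrow> 'a" (infixl \<open>\<cdot>\<close> 70)
  assumes Hausdorff: "Hausdorff_space X"
    and compact: "compact_space X"
    and mult_closed: "x \<in> topspace X \<Longrightarrow> y \<in> topspace X \<Longrightarrow> x \<cdot> y \<in> topspace X"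
    and assoc: "x \<in> topspace X \<Longrightarrow> y \<in> topspace X \<Longrightarrow> z \<in> topspace X \<Longrightarrow> x \<cdot> y \<cdot> z = x \<cdot> (y \<cdot> z)"
    and continuous_right: "y \<in> topspace X \<Longrightarrow> continuous_map X X (\<lambda>x. x \<cdot> y)"
begin

lemma closedin_image_mult_right:
  assumes "closedin X C" "y \<in> topspace X"
  shows "closedin X ((\<lambda>x. x \<cdot> y) ` C)"
proof -
  have "compactin X C"
    using closedin_compact_space[OF compact assms(1)] .
  then have "compactin X ((\<lambda>x. x \<cdot> y) ` C)"
    using image_compactin continuous_right[OF assms(2)] by blast
  then show ?thesis
    using compactin_imp_closedin[OF Hausdorff] by blast
qed

definition closed_subsemigroup :: "'a set \<Rightarrow> bool" where
  "closed_subsemigroup B \<longleftrightarrow> B \<noteq> {} \<and> closedin X B \<and> (\<forall>x\<in>B. \<forall>y\<in>B. x \<cdot> y \<in> B)"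

definition closed_left_ideal :: "'a set \<Rightarrow> bool" where
  "closed_left_ideal L \<longleftrightarrow> L \<noteq> {} \<and> closedin X L \<and> (\<forall>x\<in>topspace X. \<forall>y\<in>L. x \<cdot> y \<in> L)"

lemma closed_left_ideal_imp_closed_subsemigroup:
  assumes "closed_left_ideal L"
  shows "closed_subsemigroup L"
proof -
  have "closedin X L"
    using assms unfolding closed_left_ideal_def by blast
  then have "L \<subseteq> topspace X"
    by (rule closedin_subset)
  with assms show ?thesis
    unfolding closed_left_ideal_def closed_subsemigroup_def by (meson subsetD)
qed

lemma closed_left_ideal_image_mult_right:
  assumes c: "c \<in> topspace X"
  shows "closed_left_ideal ((\<lambda>x. x \<cdot> c) ` topspace X)"
  unfolding closed_left_ideal_def
proof (intro conjI ballI)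
  show "(\<lambda>x. x \<cdot> c) ` topspace X \<noteq> {}"
    using c by blast
  show "closedin X ((\<lambda>x. x \<cdot> c) ` topspace X)"
    using closedin_image_mult_right[OF closedin_topspace c] .
  fix x y assume x: "x \<in> topspace X" and "y \<in> (\<lambda>x. x \<cdot> c) ` topspace X"
  then obtain u where "u \<in> topspace X" "y = u \<cdot> c"
    by blast
  then have "x \<cdot> y = (x \<cdot> u) \<cdot> c" "x \<cdot> u \<in> topspace X"
    using x c assoc mult_closed by simp_all
  then show "x \<cdot> y \<in> (\<lambda>x. x \<cdot> c) ` topspace X"
    by blast
qed

lemma minimal_closed_subsemigroup_exists:
  assumes "closed_subsemigroup A"
  shows "\<exists>M. closed_subsemigroup M \<and> M \<subseteq> A \<and> (\<forall>B. closed_subsemigroup B \<longrightarrow> B \<subseteq> M \<longrightarrow> B = M)"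
proof -
  have "\<exists>M\<in>{B. closed_subsemigroup B \<and> B \<subseteq> A}. \<forall>B\<in>{B. closed_subsemigroup B \<and> B \<subseteq> A}. B \<subseteq> M \<longrightarrow> B = M"
  proof (rule compact_space_minimal_closedin[OF compact])
    show "{B. closed_subsemigroup B \<and> B \<subseteq> A} \<noteq> {}"
      using assms by blast
    show "closedin X B \<and> B \<noteq> {}" if "B \<in> {B. closed_subsemigroup B \<and> B \<subseteq> A}" for B
      using that unfolding closed_subsemigroup_def by blast
    fix \<C> assume \<C>: "\<C> \<noteq> {}" "subset.chain {B. closed_subsemigroup B \<and> B \<subseteq> A} \<C>" "\<Inter>\<C> \<noteq> {}"
    then have "\<C> \<subseteq> {B. closed_subsemigroup B \<and> B \<subseteq> A}"
      by (simp add: subset_chain_def)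
    then have \<C>_sub: "\<forall>B\<in>\<C>. closed_subsemigroup B \<and> B \<subseteq> A"
      by blast
    then have "closedin X (\<Inter>\<C>)"
      using \<C>(1) unfolding closed_subsemigroup_def by (intro closedin_Inter) auto
    moreover have "\<Inter>\<C> \<subseteq> A" "\<forall>x\<in>\<Inter>\<C>. \<forall>y\<in>\<Inter>\<C>. x \<cdot> y \<in> \<Inter>\<C>"
      using \<C>(1) \<C>_sub unfolding closed_subsemigroup_def by blast+
    ultimately show "\<Inter>\<C> \<in> {B. closed_subsemigroup B \<and> B \<subseteq> A}"
      using \<C>(3) unfolding closed_subsemigroup_def by blast
  qed
  then obtain M where M: "closed_subsemigroup M" "M \<subseteq> A"
    and minimal: "\<forall>B\<in>{B. closed_subsemigroup B \<and> B \<subseteq> A}. B \<subseteq> M \<longrightarrow> B = M"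
    by blast
  have "B = M" if "closed_subsemigroup B" "B \<subseteq> M" for B
  proof -
    have "B \<subseteq> A"
      using that(2) M(2) by (rule order_trans)
    then show ?thesis
      using minimal that by blast
  qed
  with M show ?thesis
    by blast
qed

text \<open>Ellis--Numakura: for \<open>a \<in> M\<close>, minimality forces first \<open>M \<cdot> a = M\<close> and then
  \<open>{b \<in> M. b \<cdot> a = a} = M\<close>.\<close>
lemma minimal_closed_subsemigroup_idempotent:
  assumes M: "closed_subsemigroup M"
    and minimal: "\<And>B. closed_subsemigroup B \<Longrightarrow> B \<subseteq> M \<Longrightarrow> B = M"
    and a: "a \<in> M"
  shows "a \<cdot> a = a"
proof -
  have M_mult: "\<And>x y. x \<in> M \<Longrightarrow> y \<in> M \<Longrightarrow> x \<cdot> y \<in> M" and "closedin X M"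
    using M unfolding closed_subsemigroup_def by blast+
  have M_top: "M \<subseteq> topspace X"
    using \<open>closedin X M\<close> by (rule closedin_subset)
  with a have a_top: "a \<in> topspace X"
    by blast
  have "closed_subsemigroup ((\<lambda>x. x \<cdot> a) ` M)"
    unfolding closed_subsemigroup_def
  proof (intro conjI ballI)
    show "(\<lambda>x. x \<cdot> a) ` M \<noteq> {}"
      using a by blast
    show "closedin X ((\<lambda>x. x \<cdot> a) ` M)"
      using closedin_image_mult_right[OF \<open>closedin X M\<close> a_top] .
    fix x y assume "x \<in> (\<lambda>x. x \<cdot> a) ` M" "y \<in> (\<lambda>x. x \<cdot> a) ` M"
    then obtain u v where uv: "u \<in> M" "v \<in> M" "x = u \<cdot> a" "y = v \<cdot> a"
      by blast
    then have "x \<cdot> y = (u \<cdot> a \<cdot> v) \<cdot> a"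
      using M_top a_top mult_closed assoc by (simp add: subsetD)
    moreover have "u \<cdot> a \<cdot> v \<in> M"
      using M_mult uv(1,2) a by blast
    ultimately show "x \<cdot> y \<in> (\<lambda>x. x \<cdot> a) ` M"
      by blast
  qed
  moreover have "(\<lambda>x. x \<cdot> a) ` M \<subseteq> M"
    using M_mult a by blast
  ultimately have "(\<lambda>x. x \<cdot> a) ` M = M"
    by (rule minimal)
  then obtain b where b: "b \<in> M" "b \<cdot> a = a"
    using a by (metis imageE)
  define B where "B = M \<inter> {x \<in> topspace X. x \<cdot> a \<in> {a}}"
  have "closed_subsemigroup B"
    unfolding closed_subsemigroup_def
  proof (intro conjI ballI)
    show "B \<noteq> {}"
      using b M_top by (auto simp: B_def)
    have "closedin X {a}"
      using closedin_t1_singleton[OF Hausdorff_imp_t1_space[OF Hausdorff] a_top] .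
    then have "closedin X {x \<in> topspace X. x \<cdot> a \<in> {a}}"
      by (rule closedin_continuous_map_preimage[OF continuous_right[OF a_top]])
    then show "closedin X B"
      unfolding B_def by (rule closedin_Int[OF \<open>closedin X M\<close>])
    fix x y assume "x \<in> B" "y \<in> B"
    then have "x \<in> M" "y \<in> M" "x \<cdot> a = a" "y \<cdot> a = a"
      by (auto simp: B_def)
    moreover from this have "x \<cdot> y \<cdot> a = a"
      using M_top a_top assoc by (simp add: subsetD)
    ultimately show "x \<cdot> y \<in> B"
      using M_mult M_top mult_closed by (auto simp: B_def)
  qed
  moreover have "B \<subseteq> M"
    by (simp add: B_def)
  ultimately have "B = M"
    by (rule minimal)
  then show ?thesis
    using a by (auto simp: B_def)
qed

lemma closed_subsemigroup_has_idempotent: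
  assumes "closed_subsemigroup A"
  shows "\<exists>e\<in>A. e \<cdot> e = e"
proof -
  obtain M where M: "closed_subsemigroup M" "M \<subseteq> A"
    and minimal: "\<And>B. closed_subsemigroup B \<Longrightarrow> B \<subseteq> M \<Longrightarrow> B = M"
    using minimal_closed_subsemigroup_exists[OF assms] by blast
  obtain a where "a \<in> M"
    using M(1) unfolding closed_subsemigroup_def by blast
  have "a \<cdot> a = a"
    using minimal_closed_subsemigroup_idempotent[OF M(1) minimal \<open>a \<in> M\<close>] .
  with \<open>a \<in> M\<close> M(2) show ?thesis
    by blast
qed

lemma minimal_closed_left_ideal_exists:
  assumes "topspace X \<noteq> {}"
  shows "\<exists>M. closed_left_ideal M \<and> (\<forall>L. closed_left_ideal L \<longrightarrow> L \<subseteq> M \<longrightarrow> L = M)"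
proof -
  have "\<exists>M\<in>{L. closed_left_ideal L}. \<forall>L\<in>{L. closed_left_ideal L}. L \<subseteq> M \<longrightarrow> L = M"
  proof (rule compact_space_minimal_closedin[OF compact])
    have "closed_left_ideal (topspace X)"
      using assms mult_closed by (simp add: closed_left_ideal_def)
    then show "{L. closed_left_ideal L} \<noteq> {}"
      by blast
    fix \<C> assume \<C>: "\<C> \<noteq> {}" "subset.chain {L. closed_left_ideal L} \<C>" "\<Inter>\<C> \<noteq> {}"
    then have "\<C> \<subseteq> {L. closed_left_ideal L}"
      by (simp add: subset_chain_def)
    then have \<C>_sub: "\<forall>L\<in>\<C>. closed_left_ideal L"
      by blast
    then have "closedin X (\<Inter>\<C>)"
      using \<C>(1) unfolding closed_left_ideal_def by (intro closedin_Inter) auto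
    moreover have "\<forall>x\<in>topspace X. \<forall>y\<in>\<Inter>\<C>. x \<cdot> y \<in> \<Inter>\<C>"
      using \<C>_sub unfolding closed_left_ideal_def by blast
    ultimately show "\<Inter>\<C> \<in> {L. closed_left_ideal L}"
      using \<C>(3) unfolding closed_left_ideal_def by blast
  qed (simp add: closed_left_ideal_def)
  then obtain M where "closed_left_ideal M"
    and "\<forall>L\<in>{L. closed_left_ideal L}. L \<subseteq> M \<longrightarrow> L = M"
    by blast
  then show ?thesis
    by (intro exI[of _ M]) (simp add: Ball_def)
qed

text \<open>An idempotent \<open>g\<close> below \<open>q\<close> generates the closed left ideal \<open>X \<cdot> g \<subseteq> M\<close>, which must be all
  of \<open>M\<close>; so \<open>q = x \<cdot> g\<close> for some \<open>x\<close>, whence \<open>g = q \<cdot> g = q\<close>.\<close>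
lemma minimal_closed_left_ideal_idempotent:
  assumes M: "closed_left_ideal M"
    and minimal: "\<And>L. closed_left_ideal L \<Longrightarrow> L \<subseteq> M \<Longrightarrow> L = M"
    and q: "q \<in> M" "q \<cdot> q = q"
  shows "minimal_idempotent (topspace X) (\<cdot>) q"
proof -
  have M_ideal: "\<And>x y. x \<in> topspace X \<Longrightarrow> y \<in> M \<Longrightarrow> x \<cdot> y \<in> M"
    using M unfolding closed_left_ideal_def by blast
  have "closedin X M"
    using M unfolding closed_left_ideal_def by blast
  then have q_top: "q \<in> topspace X"
    using closedin_subset[OF \<open>closedin X M\<close>] q(1) by blast
  have "g = q" if g: "g \<in> topspace X" "g \<cdot> g = g" "g \<cdot> q = g" "q \<cdot> g = g" for g
  proof -
    define L where "L = (\<lambda>x. x \<cdot> g) ` topspace X"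
    have "closed_left_ideal L"
      unfolding L_def by (rule closed_left_ideal_image_mult_right[OF g(1)])
    moreover have "L \<subseteq> M"
    proof
      fix y assume "y \<in> L"
      then obtain x where x: "x \<in> topspace X" "y = x \<cdot> g"
        unfolding L_def by blast
      then have "y = (x \<cdot> g) \<cdot> q"
        using g assoc q_top by simp
      then show "y \<in> M"
        using M_ideal[OF mult_closed[OF x(1) g(1)] q(1)] by simp
    qed
    ultimately have "L = M"
      by (rule minimal)
    then obtain x where x: "x \<in> topspace X" "q = x \<cdot> g"
      using q(1) unfolding L_def by blast
    then have "q \<cdot> g = q"
      using g assoc by simp
    with g(4) show "g = q"
      by simp
  qed
  then show ?thesis
    using q(2) q_top unfolding minimal_idempotent_def by blast
qed

lemma minimal_idempotent_exists:
  assumes "topspace X \<noteq> {}"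
  shows "\<exists>e. minimal_idempotent (topspace X) (\<cdot>) e"
proof -
  obtain M where M: "closed_left_ideal M"
    and minimal: "\<And>L. closed_left_ideal L \<Longrightarrow> L \<subseteq> M \<Longrightarrow> L = M"
    using minimal_closed_left_ideal_exists[OF assms] by blast
  obtain q where "q \<in> M" "q \<cdot> q = q"
    using closed_subsemigroup_has_idempotent[OF closed_left_ideal_imp_closed_subsemigroup[OF M]] by blast
  then have "minimal_idempotent (topspace X) (\<cdot>) q"
    using minimal_closed_left_ideal_idempotent[OF M minimal] by simp
  then show ?thesis
    by blast
qed

lemma minimal_idempotent_in_ideal:
  assumes e: "minimal_idempotent (topspace X) (\<cdot>) e" and J: "is_ideal (topspace X) (\<cdot>) J"
  shows "e \<in> J"
proof -
  have e_top: "e \<in> topspace X" and ee: "e \<cdot> e = e"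
    and e_min: "\<And>g. g \<in> topspace X \<Longrightarrow> g \<cdot> g = g \<Longrightarrow> g \<cdot> e = g \<Longrightarrow> e \<cdot> g = g \<Longrightarrow> g = e"
    using e unfolding minimal_idempotent_def by blast+
  have J_top: "J \<subseteq> topspace X" and J_ideal: "\<And>x y. x \<in> topspace X \<Longrightarrow> y \<in> J \<Longrightarrow> x \<cdot> y \<in> J \<and> y \<cdot> x \<in> J"
    using J unfolding is_ideal_def by blast+
  obtain j where j: "j \<in> J"
    using J unfolding is_ideal_def by blast
  define c where "c = j \<cdot> e"
  have c_top: "c \<in> topspace X"
    using j J_top e_top mult_closed unfolding c_def by blast
  \<comment> \<open>An idempotent \<open>g\<close> of the closed subsemigroup \<open>X \<cdot> c \<subseteq> J\<close> yields the idempotent \<open>e \<cdot> g \<in> J\<close> below \<open>e\<close>.\<close>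
  define A where "A = (\<lambda>x. x \<cdot> c) ` topspace X"
  have "closed_subsemigroup A"
    unfolding A_def
    by (rule closed_left_ideal_imp_closed_subsemigroup[OF closed_left_ideal_image_mult_right[OF c_top]])
  then obtain g where g: "g \<in> A" "g \<cdot> g = g"
    using closed_subsemigroup_has_idempotent by blast
  then obtain u where u: "u \<in> topspace X" "g = u \<cdot> c"
    unfolding A_def by blast
  have g_top: "g \<in> topspace X"
    using u c_top mult_closed by simp
  have "g \<in> J"
    using u J_ideal[OF u(1)] J_ideal[OF _ j] e_top unfolding c_def by blast
  have ge: "g \<cdot> e = g"
    using u j J_top e_top ee assoc mult_closed unfolding c_def by (simp add: subsetD)
  define h where "h = e \<cdot> g"
  have h_top: "h \<in> topspace X"
    using e_top g_top mult_closed unfolding h_def by simp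
  have "g \<cdot> (e \<cdot> g) = g" "e \<cdot> (e \<cdot> g) = e \<cdot> g"
    using assoc[OF g_top e_top g_top] assoc[OF e_top e_top g_top] ge ee g(2) by simp_all
  then have "h \<cdot> h = h" "h \<cdot> e = h" "e \<cdot> h = h"
    using e_top g_top ge assoc mult_closed unfolding h_def by simp_all
  then have "h = e"
    using e_min h_top by blast
  moreover have "h \<in> J"
    using J_ideal[OF e_top \<open>g \<in> J\<close>] unfolding h_def by blast
  ultimately show ?thesis
    by simp
qed

lemma
  assumes "topspace X \<noteq> {}"
  shows Kmin_eq_Inter_ideals: "Kmin (topspace X) (\<cdot>) = \<Inter>{J. is_ideal (topspace X) (\<cdot>) J}"
    and is_ideal_Kmin: "is_ideal (topspace X) (\<cdot>) (Kmin (topspace X) (\<cdot>))"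
proof -
  obtain e where e: "minimal_idempotent (topspace X) (\<cdot>) e"
    using minimal_idempotent_exists[OF assms] by blast
  then have "e \<in> topspace X"
    by (simp add: minimal_idempotent_def)
  with e have "is_ideal (topspace X) (\<cdot>) (\<Inter>{J. is_ideal (topspace X) (\<cdot>) J})"
    using is_ideal_Inter_ideals mult_closed minimal_idempotent_in_ideal by metis
  moreover from this show "Kmin (topspace X) (\<cdot>) = \<Inter>{J. is_ideal (topspace X) (\<cdot>) J}"
    by (rule Kmin_eqI) blast
  ultimately show "is_ideal (topspace X) (\<cdot>) (Kmin (topspace X) (\<cdot>))"
    by simp
qed

lemma Kmin_subset_ideal:
  assumes "is_ideal (topspace X) (\<cdot>) J"
  shows "Kmin (topspace X) (\<cdot>) \<subseteq> J"
proof -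
  have "topspace X \<noteq> {}"
    using assms unfolding is_ideal_def by blast
  then show ?thesis
    using Kmin_eq_Inter_ideals assms by blast
qed

lemma minimal_idempotent_in_Kmin:
  assumes "minimal_idempotent (topspace X) (\<cdot>) e"
  shows "e \<in> Kmin (topspace X) (\<cdot>)"
proof -
  have "topspace X \<noteq> {}"
    using assms unfolding minimal_idempotent_def by blast
  then show ?thesis
    using Kmin_eq_Inter_ideals minimal_idempotent_in_ideal[OF assms] by blast
qed

lemma closed_subsemigroup_subtopology:
  assumes "closedin X A" and A_mult: "\<And>x y. x \<in> A \<Longrightarrow> y \<in> A \<Longrightarrow> x \<cdot> y \<in> A"
  shows "compact_right_topological_semigroup (subtopology X A) (\<cdot>)"
proof
  have A: "A \<subseteq> topspace X"
    using closedin_subset[OF assms(1)] .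
  then have top: "topspace (subtopology X A) = A"
    by (rule topspace_subtopology_subset)
  show "Hausdorff_space (subtopology X A)"
    using Hausdorff by (rule Hausdorff_space_subtopology)
  show "compact_space (subtopology X A)"
    using closedin_compact_space[OF compact assms(1)] by (rule compact_space_subtopology)
  fix x y z
  show "x \<in> topspace (subtopology X A) \<Longrightarrow> y \<in> topspace (subtopology X A)
    \<Longrightarrow> x \<cdot> y \<in> topspace (subtopology X A)"
    unfolding top by (rule A_mult)
  show "x \<in> topspace (subtopology X A) \<Longrightarrow> y \<in> topspace (subtopology X A)
    \<Longrightarrow> z \<in> topspace (subtopology X A) \<Longrightarrow> x \<cdot> y \<cdot> z = x \<cdot> (y \<cdot> z)"
    unfolding top using A assoc by blast
  assume "y \<in> topspace (subtopology X A)"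
  then have "y \<in> A"
    by (simp add: top)
  then show "continuous_map (subtopology X A) (subtopology X A) (\<lambda>x. x \<cdot> y)"
    using A A_mult continuous_right
    by (simp add: continuous_map_into_subtopology continuous_map_from_subtopology top image_subset_iff subsetD)
qed

text \<open>Only left translations by elements of \<open>C\<close> are assumed continuous, so the closure is taken in
  two stages: first in the right factor, then along the continuous right translations.\<close>
lemma closure_of_mult_subset:
  assumes E: "closedin X E" and CD: "\<And>c d. c \<in> C \<Longrightarrow> d \<in> D \<Longrightarrow> c \<cdot> d \<in> E"
    and continuous_left: "\<And>c. c \<in> C \<Longrightarrow> continuous_map X X (\<lambda>x. c \<cdot> x)"
    and x: "x \<in> X closure_of C" and y: "y \<in> X closure_of D"
  shows "x \<cdot> y \<in> E"
proof -
  have "c \<cdot> y \<in> E" if c: "c \<in> C" for c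
  proof -
    have "(\<lambda>x. c \<cdot> x) ` D \<subseteq> E"
      using CD[OF c] by blast
    then have "(\<lambda>x. c \<cdot> x) ` (X closure_of D) \<subseteq> E"
      by (rule image_closure_of_subset_closedin[OF continuous_left[OF c] E])
    then show ?thesis
      using y by blast
  qed
  then have "(\<lambda>c. c \<cdot> y) ` C \<subseteq> E"
    by blast
  moreover have "y \<in> topspace X"
    using closure_of_subset_topspace y by (rule subsetD)
  ultimately have "(\<lambda>c. c \<cdot> y) ` (X closure_of C) \<subseteq> E"
    by (intro image_closure_of_subset_closedin[OF continuous_right E])
  then show ?thesis
    using x by blast
qed

lemma closure_of_ideal:
  assumes A: "A \<subseteq> topspace X" and B: "is_ideal A (\<cdot>) B"
    and continuous_left: "\<And>a. a \<in> A \<Longrightarrow> continuous_map X X (\<lambda>x. a \<cdot> x)"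
  shows "is_ideal (X closure_of A) (\<cdot>) (X closure_of B)"
proof -
  have B_sub: "B \<subseteq> A" and B_ideal: "\<And>a b. a \<in> A \<Longrightarrow> b \<in> B \<Longrightarrow> a \<cdot> b \<in> B \<and> b \<cdot> a \<in> B"
    and "B \<noteq> {}"
    using B unfolding is_ideal_def by blast+
  have B_cl: "B \<subseteq> X closure_of B"
    using B_sub A by (simp add: closure_of_subset subset_trans)
  have AB: "a \<cdot> b \<in> X closure_of B" if "a \<in> A" "b \<in> B" for a b
    using B_ideal[OF that] B_cl by blast
  have BA: "b \<cdot> a \<in> X closure_of B" if "b \<in> B" "a \<in> A" for b a
    using B_ideal[OF that(2,1)] B_cl by blast
  have continuous_left_B: "continuous_map X X (\<lambda>x. b \<cdot> x)" if "b \<in> B" for b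
    using continuous_left B_sub that by blast
  have "x \<cdot> y \<in> X closure_of B \<and> y \<cdot> x \<in> X closure_of B"
    if x: "x \<in> X closure_of A" and y: "y \<in> X closure_of B" for x y
    using closure_of_mult_subset[OF closedin_closure_of AB continuous_left x y]
      closure_of_mult_subset[OF closedin_closure_of BA continuous_left_B y x] by blast
  moreover have "X closure_of B \<noteq> {}"
    using \<open>B \<noteq> {}\<close> B_cl by blast
  moreover have "X closure_of B \<subseteq> X closure_of A"
    by (rule closure_of_mono[OF B_sub])
  ultimately show ?thesis
    unfolding is_ideal_def by blast
qed

lemma product_semigroup:
  "compact_right_topological_semigroup (product_topology (\<lambda>_. X) I) (\<lambda>x y. \<lambda>i\<in>I. x i \<cdot> y i)"
proof
  show "Hausdorff_space (product_topology (\<lambda>_. X) I)"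
    by (simp add: Hausdorff_space_product_topology Hausdorff)
  show "compact_space (product_topology (\<lambda>_. X) I)"
    by (simp add: compact_space_product_topology compact)
  fix x y z
  assume x: "x \<in> topspace (product_topology (\<lambda>_. X) I)" and y: "y \<in> topspace (product_topology (\<lambda>_. X) I)"
  then show "(\<lambda>i\<in>I. x i \<cdot> y i) \<in> topspace (product_topology (\<lambda>_. X) I)"
    using mult_closed by (simp add: PiE_iff)
  show "z \<in> topspace (product_topology (\<lambda>_. X) I) \<Longrightarrow>
    (\<lambda>i\<in>I. (\<lambda>i\<in>I. x i \<cdot> y i) i \<cdot> z i) = (\<lambda>i\<in>I. x i \<cdot> (\<lambda>i\<in>I. y i \<cdot> z i) i)"
    using x y assoc by (intro restrict_ext) (simp add: PiE_iff)
  show "continuous_map (product_topology (\<lambda>_. X) I) (product_topology (\<lambda>_. X) I) (\<lambda>x. \<lambda>i\<in>I. x i \<cdot> y i)"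
    using y continuous_right by (intro continuous_map_product_coordinatewise) (simp add: PiE_iff)
qed

end

lemma Kmin_hom_image_subset:
  assumes X: "compact_right_topological_semigroup X f"
    and Y: "compact_right_topological_semigroup Y g"
    and h: "h ` topspace X \<subseteq> topspace Y"
      "\<And>x y. x \<in> topspace X \<Longrightarrow> y \<in> topspace X \<Longrightarrow> h (f x y) = g (h x) (h y)"
    and e: "e \<in> topspace X" "h e \<in> Kmin (topspace Y) g"
  shows "h ` Kmin (topspace X) f \<subseteq> Kmin (topspace Y) g"
proof -
  interpret X: compact_right_topological_semigroup X f
    by (rule X)
  interpret Y: compact_right_topological_semigroup Y g
    by (rule Y)
  have "topspace Y \<noteq> {}"
    using h(1) e(1) by blast
  then have KY: "is_ideal (topspace Y) g (Kmin (topspace Y) g)"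
    by (rule Y.is_ideal_Kmin)
  have "is_ideal (topspace X) f (topspace X \<inter> h -` Kmin (topspace Y) g)"
    unfolding is_ideal_def
  proof (intro conjI ballI)
    fix x r assume x: "x \<in> topspace X" and r: "r \<in> topspace X \<inter> h -` Kmin (topspace Y) g"
    have hx: "h x \<in> topspace Y"
      using h(1) x by blast
    show "f x r \<in> topspace X \<inter> h -` Kmin (topspace Y) g" "f r x \<in> topspace X \<inter> h -` Kmin (topspace Y) g"
      using KY hx r x X.mult_closed h(2) unfolding is_ideal_def by auto
  qed (use e in auto)
  then show ?thesis
    using X.Kmin_subset_ideal by blast
qed


section \<open>The semigroups \<open>\<beta>\<nat>\<close>, \<open>Y\<close> and \<open>S\<close>\<close>

lemma betaW_semigroup: "compact_right_topological_semigroup betaW_top uadd"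
  by unfold_locales
    (simp_all add: Hausdorff_space_betaW_top compact_space_betaW_top uadd_in_betaW uadd_assoc
      continuous_map_uadd_right)

lemma topspace_subtopology_betaN: "topspace (subtopology betaW_top betaN) = betaN"
  using betaN_subset_betaW by (simp add: topspace_subtopology Int_absorb1)

lemma betaN_semigroup: "compact_right_topological_semigroup (subtopology betaW_top betaN) uadd"
proof (rule compact_right_topological_semigroup.closed_subsemigroup_subtopology[OF betaW_semigroup closedin_betaN])
  fix x y assume "x \<in> betaN" "y \<in> betaN"
  then show "uadd x y \<in> betaN"
    using betaN_subset_betaW uadd_in_betaN by blast
qed

lemma Yadd_eq: "Yadd l = (\<lambda>x y. \<lambda>i\<in>{1..l}. uadd (x i) (y i))"
  by (intro ext) (simp add: Yadd_def)

lemma Yadd_diag: "Yadd l (\<lambda>i\<in>{1..l}. p) (\<lambda>i\<in>{1..l}. r) = (\<lambda>i\<in>{1..l}. uadd p r)"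
  unfolding Yadd_def by (intro restrict_ext) simp

lemma Y_semigroup: "compact_right_topological_semigroup (Ytop l) (Yadd l)"
  unfolding Ytop_def Yadd_eq
  by (rule compact_right_topological_semigroup.product_semigroup[OF betaW_semigroup])

lemma poly_tuple_add:
  "Yadd l (poly_tuple l d a) (poly_tuple l d b) = poly_tuple l d (\<lambda>k. a k + b k)"
  by (intro ext) (simp add: Yadd_def poly_tuple_def uadd_pr sum.distrib distrib_right)

lemma So_subset_topspace: "So l d \<subseteq> topspace (Ytop l)"
  by (auto simp: So_def poly_tuple_def Ytop_def pr_in_betaW)

lemma poly_tuple_in_So: "poly_tuple l d a \<in> So l d"
  unfolding So_def by blast

lemma poly_tuple_in_Io: "(\<And>k. k \<le> d \<Longrightarrow> 1 \<le> a k) \<Longrightarrow> poly_tuple l d a \<in> Io l d"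
  unfolding Io_def by blast

lemma So_ideal_So: "is_ideal (So l d) (Yadd l) (So l d)"
  unfolding is_ideal_def
proof (intro conjI ballI)
  show "So l d \<noteq> {}"
    by (auto simp: So_def)
  fix x y assume "x \<in> So l d" "y \<in> So l d"
  then obtain a b where "x = poly_tuple l d a" "y = poly_tuple l d b"
    by (auto simp: So_def)
  then show "Yadd l x y \<in> So l d" "Yadd l y x \<in> So l d"
    by (simp_all add: poly_tuple_add poly_tuple_in_So)
qed simp

lemma Io_ideal_So: "is_ideal (So l d) (Yadd l) (Io l d)"
  unfolding is_ideal_def
proof (intro conjI ballI)
  show "Io l d \<noteq> {}"
    by (auto simp: Io_def)
  show "Io l d \<subseteq> So l d"
    by (auto simp: Io_def So_def)
  fix x y assume "x \<in> So l d" "y \<in> Io l d"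
  then obtain a b where "x = poly_tuple l d a" "y = poly_tuple l d b" "\<forall>k\<le>d. 1 \<le> b k"
    by (auto simp: So_def Io_def)
  then show "Yadd l x y \<in> Io l d" "Yadd l y x \<in> Io l d"
    by (auto simp: poly_tuple_add intro!: poly_tuple_in_Io)
qed

lemma continuous_map_Yadd_left:
  assumes "a \<in> So l d"
  shows "continuous_map (Ytop l) (Ytop l) (Yadd l a)"
proof -
  have "continuous_map betaW_top betaW_top (uadd (a i))" if i: "i \<in> {1..l}" for i
  proof -
    obtain n where "a i = pr n"
      using assms i by (auto simp: So_def poly_tuple_def)
    then show ?thesis
      by (simp add: continuous_map_uadd_pr_left)
  qed
  then show ?thesis
    unfolding Ytop_def Yadd_eq by (rule continuous_map_product_coordinatewise)
qed

lemma diag_in_closure_So: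
  assumes "r \<in> betaW"
  shows "(\<lambda>i\<in>{1..l}. r) \<in> Ytop l closure_of So l d"
proof -
  have diag: "continuous_map betaW_top (Ytop l) (\<lambda>r. \<lambda>i\<in>{1..l}. r)"
    unfolding Ytop_def continuous_map_componentwise by (auto simp: continuous_map_id[unfolded id_def])
  have "(\<Sum>k\<le>d. (if k = 0 then m else 0) * i ^ k) = m" for m i :: nat
    by (induction d) simp_all
  then have "(\<lambda>i\<in>{1..l}. pr m) = poly_tuple l d (\<lambda>k. if k = 0 then m else 0)" for m
    by (simp add: poly_tuple_def)
  then have "(\<lambda>r. \<lambda>i\<in>{1..l}. r) ` range pr \<subseteq> So l d"
    unfolding So_def by blast
  then have "Ytop l closure_of ((\<lambda>r. \<lambda>i\<in>{1..l}. r) ` range pr) \<subseteq> Ytop l closure_of So l d"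
    by (rule closure_of_mono)
  then have "(\<lambda>r. \<lambda>i\<in>{1..l}. r) ` (betaW_top closure_of range pr) \<subseteq> Ytop l closure_of So l d"
    using continuous_map_image_closure_subset[OF diag] by (rule subset_trans[rotated])
  then show ?thesis
    using assms closure_of_range_pr by blast
qed

lemma closure_So_semigroup:
  "compact_right_topological_semigroup (subtopology (Ytop l) (Ytop l closure_of So l d)) (Yadd l)"
  and closure_Io_ideal: "is_ideal (Ytop l closure_of So l d) (Yadd l) (Ytop l closure_of Io l d)"
proof -
  interpret Y: compact_right_topological_semigroup "Ytop l" "Yadd l"
    by (rule Y_semigroup)
  have "is_ideal (Ytop l closure_of So l d) (Yadd l) (Ytop l closure_of So l d)"
    by (rule Y.closure_of_ideal[OF So_subset_topspace So_ideal_So continuous_map_Yadd_left])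
  then show "compact_right_topological_semigroup (subtopology (Ytop l) (Ytop l closure_of So l d)) (Yadd l)"
    unfolding is_ideal_def by (intro Y.closed_subsemigroup_subtopology) auto
  show "is_ideal (Ytop l closure_of So l d) (Yadd l) (Ytop l closure_of Io l d)"
    by (rule Y.closure_of_ideal[OF So_subset_topspace Io_ideal_So continuous_map_Yadd_left])
qed

lemma topspace_subtopology_closure_So:
  "topspace (subtopology (Ytop l) (Ytop l closure_of So l d)) = Ytop l closure_of So l d"
  by (simp add: topspace_subtopology Int_absorb1 closure_of_subset_topspace)

text \<open>Coordinatewise, an idempotent \<open>g \<le> (q, \<dots>, q)\<close> satisfies \<open>g i + q = g i\<close>, which puts
  \<open>g i\<close> into \<open>\<beta>\<nat>\<close>, where minimality of \<open>q\<close> applies.\<close>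
lemma minimal_idempotent_diag:
  assumes q: "minimal_idempotent betaN uadd q"
  shows "minimal_idempotent (Ytop l closure_of So l d) (Yadd l) (\<lambda>i\<in>{1..l}. q)"
proof -
  have q_N: "q \<in> betaN" and qq: "uadd q q = q"
    and q_min: "\<And>g. g \<in> betaN \<Longrightarrow> uadd g g = g \<Longrightarrow> uadd g q = g \<Longrightarrow> uadd q g = g \<Longrightarrow> g = q"
    using q unfolding minimal_idempotent_def by blast+
  have diag_S: "(\<lambda>i\<in>{1..l}. q) \<in> Ytop l closure_of So l d"
    using q_N betaN_subset_betaW diag_in_closure_So by blast
  have diag_idem: "Yadd l (\<lambda>i\<in>{1..l}. q) (\<lambda>i\<in>{1..l}. q) = (\<lambda>i\<in>{1..l}. q)"
    by (simp only: Yadd_diag qq)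
  have diag_min: "\<forall>g \<in> Ytop l closure_of So l d. Yadd l g g = g \<and> Yadd l g (\<lambda>i\<in>{1..l}. q) = g
    \<and> Yadd l (\<lambda>i\<in>{1..l}. q) g = g \<longrightarrow> g = (\<lambda>i\<in>{1..l}. q)"
  proof (intro ballI impI, elim conjE)
    fix g assume g: "g \<in> Ytop l closure_of So l d" "Yadd l g g = g"
      "Yadd l g (\<lambda>i\<in>{1..l}. q) = g" "Yadd l (\<lambda>i\<in>{1..l}. q) g = g"
    have g_top: "g \<in> topspace (Ytop l)"
      by (rule subsetD[OF closure_of_subset_topspace g(1)])
    show "g = (\<lambda>i\<in>{1..l}. q)"
    proof (rule extensionalityI[of _ "{1..l}"])
      show "g \<in> extensional {1..l}"
        using g_top by (simp add: Ytop_def PiE_iff)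
      show "(\<lambda>i\<in>{1..l}. q) \<in> extensional {1..l}"
        by simp
      fix i assume i: "i \<in> {1..l}"
      have gi: "uadd (g i) (g i) = g i" "uadd (g i) q = g i" "uadd q (g i) = g i"
        using fun_cong[OF g(2), of i] fun_cong[OF g(3), of i] fun_cong[OF g(4), of i] i
        by (simp_all add: Yadd_def)
      have "g i \<in> betaW"
        using g_top i by (simp add: Ytop_def PiE_iff)
      then have "uadd (g i) q \<in> betaN"
        using q_N by (rule uadd_in_betaN)
      then have "g i \<in> betaN"
        by (simp only: gi(2))
      then have "g i = q"
        using gi by (rule q_min)
      then show "g i = (\<lambda>i\<in>{1..l}. q) i"
        using i by simp
    qed
  qed
  show ?thesis
    unfolding minimal_idempotent_def by (intro conjI diag_S diag_idem diag_min)
qed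

lemma diag_Kmin_betaN_subset:
  "(\<lambda>p. \<lambda>i\<in>{1..l}. p) ` Kmin betaN uadd \<subseteq> Kmin (Ytop l closure_of So l d) (Yadd l)"
proof -
  interpret N: compact_right_topological_semigroup "subtopology betaW_top betaN" uadd
    by (rule betaN_semigroup)
  interpret S: compact_right_topological_semigroup "subtopology (Ytop l) (Ytop l closure_of So l d)" "Yadd l"
    by (rule closure_So_semigroup)
  have "pr 1 \<in> betaN"
    by (simp add: betaN_def ultra_pr) (simp add: pr_def)
  then obtain q where q: "minimal_idempotent betaN uadd q"
    using N.minimal_idempotent_exists unfolding topspace_subtopology_betaN by blast
  have "(\<lambda>p. \<lambda>i\<in>{1..l}. p) ` betaN \<subseteq> Ytop l closure_of So l d"
    using diag_in_closure_So betaN_subset_betaW by blast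
  moreover have "(\<lambda>i\<in>{1..l}. uadd x y) = Yadd l (\<lambda>i\<in>{1..l}. x) (\<lambda>i\<in>{1..l}. y)" for x y
    by (simp only: Yadd_diag)
  moreover have "q \<in> betaN"
    using q unfolding minimal_idempotent_def by blast
  moreover have "(\<lambda>i\<in>{1..l}. q) \<in> Kmin (Ytop l closure_of So l d) (Yadd l)"
    by (rule S.minimal_idempotent_in_Kmin[unfolded topspace_subtopology_closure_So,
          OF minimal_idempotent_diag[OF q]])
  ultimately show ?thesis
    by (rule Kmin_hom_image_subset[OF betaN_semigroup closure_So_semigroup,
          unfolded topspace_subtopology_betaN topspace_subtopology_closure_So])
qed

theorem mainTheorem6:
  fixes d l :: nat
  assumes "0 < d" and "d < l"
  shows "is_subsemigroup (Ytop l closure_of So l d) (topspace (Ytop l)) (Yadd l)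
    \<and> is_ideal (Ytop l closure_of So l d) (Yadd l) (Ytop l closure_of Io l d)
    \<and> (\<forall>p \<in> Kmin betaN uadd.
          (\<lambda>i\<in>{1..l}. p) \<in> Kmin (Ytop l closure_of So l d) (Yadd l)
        \<and> (\<lambda>i\<in>{1..l}. p) \<in> Ytop l closure_of Io l d)"
proof -
  interpret S: compact_right_topological_semigroup "subtopology (Ytop l) (Ytop l closure_of So l d)" "Yadd l"
    by (rule closure_So_semigroup)
  have "is_subsemigroup (Ytop l closure_of So l d) (topspace (Ytop l)) (Yadd l)"
    unfolding is_subsemigroup_def
    using closure_of_subset_topspace S.mult_closed[unfolded topspace_subtopology_closure_So] by (intro conjI ballI)
  moreover have "Kmin (Ytop l closure_of So l d) (Yadd l) \<subseteq> Ytop l closure_of Io l d"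
    using S.Kmin_subset_ideal[unfolded topspace_subtopology_closure_So, OF closure_Io_ideal] .
  then have "\<forall>p \<in> Kmin betaN uadd. (\<lambda>i\<in>{1..l}. p) \<in> Kmin (Ytop l closure_of So l d) (Yadd l)
      \<and> (\<lambda>i\<in>{1..l}. p) \<in> Ytop l closure_of Io l d"
    using diag_Kmin_betaN_subset by blast
  ultimately show ?thesis
    using closure_Io_ideal by (intro conjI)
qed

end
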